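(* Consider the queueing system in the context under the MaxWeight policy with a diagonal matrix $\Delta$ with positive diagonal entries, in overload ($\rho\notin\mathcal{P}$). Then the vector $\eta=\lim_{t\to\infty}X(t)/t$ is the unique minimizer of $$\langle\eta,\Delta\eta\rangle=\min_{\eta'\in\Psi(\rho,\mathcal{S})}\langle\eta',\Delta\eta'\rangle,\qquad \Psi(\rho,\mathcal{S})=\Big\{(\rho-r)^+: r=\sum_{S\in\mathcal{S}}\alpha_SS,\ \alpha_S\ge0,\ \sum_{S\in\mathcal{S}}\alpha_S\le1\Big\}.$$
   Context: Model: $Q$ queues, finite set $\mathcal{S}=\{S_1,\dots,S_N\}\subset\mathbb{R}^Q_{\ge0}$ of service vectors, discrete time. Arrivals $A(t)$ with $0\le A_q(t)\le\bar A_q<\infty$ and $\rho_q=\lim_{t\to\infty}\frac1t\sum_{s=0}^{t-1}A_q(s)\in(0,\infty)$. Departures $D_q(t)=\min\{S_q(t),X_q(t)\}$, $X(t+1)=X(t)+A(t)-D(t)$, $X(0)=0$, with $S(t)\in\arg\max_{S\in\mathcal{S}}\langle S,\Delta X(t)\rangle$. $(x)^+$ is the componentwise positive part. Stability region $\mathcal{P}=\{r\in\mathbb{R}^Q_{\ge0}: r\le\sum_n\alpha_nS_n\text{ for some }\alpha_n\ge0,\sum_n\alpha_n=1\}$. (Under these assumptions the limit $\lim_t X(t)/t$ exists.) *)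

theory Defs
  imports "HOL-Analysis.Analysis"
begin

text \<open>Vectors in R^Q are modelled as real^'q with 'q a finite index type (the queues).\<close>

definition pos_part :: "real^'q \<Rightarrow> real^'q" where
  "pos_part x = (\<chi> q. max 0 (x $ q))"

definition stab_region :: "(real^'q) set \<Rightarrow> (real^'q) set" where
  "stab_region SS = {r. (\<forall>q. 0 \<le> r $ q) \<and>
     (\<exists>\<alpha>. (\<forall>S\<in>SS. 0 \<le> \<alpha> S) \<and> (\<Sum>S\<in>SS. \<alpha> S) = 1 \<and>
          (\<forall>q. r $ q \<le> (\<Sum>S\<in>SS. \<alpha> S *\<^sub>R S) $ q))}"

definition Psi :: "real^'q \<Rightarrow> (real^'q) set \<Rightarrow> (real^'q) set" where
  "Psi \<rho> SS = {pos_part (\<rho> - r) | r. \<exists>\<alpha>. (\<forall>S\<in>SS. 0 \<le> \<alpha> S) \<and> (\<Sum>S\<in>SS. \<alpha> S) \<le> 1 \<and>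
          r = (\<Sum>S\<in>SS. \<alpha> S *\<^sub>R S)}"

end

theory Submission
  imports Defs "HOL-Real_Asymp.Real_Asymp"
begin

text \<open>Let \<open>w = \<Delta>\<eta>\<close> and let \<open>D(t)\<close> be the departures, whose Cesaro means tend to
  \<open>\<rho> - \<eta>\<close>. A queue with \<open>\<eta>\<^sub>q > 0\<close> grows linearly, so eventually it is always served at
  the full scheduled rate; hence eventually \<open>w \<bullet> D(t) = w \<bullet> Sch(t)\<close>. Dividing the MaxWeight
  inequality by \<open>t\<close> shows that the schedule is asymptotically MaxWeight for \<open>w\<close>, and averaging
  gives \<open>S \<bullet> w \<le> w \<bullet> (\<rho> - \<eta>)\<close> for every \<open>S \<in> \<S>\<close>.

  A limit point \<open>l\<close> of the mean schedules lies in the convex hull of \<open>\<S>\<close>, dominates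
  \<open>\<rho> - \<eta>\<close>, and agrees with it where \<open>\<eta> > 0\<close>; thus \<open>\<eta> = (\<rho> - l)\<^sup>+ \<in> \<Psi>\<close>. For any
  \<open>(\<rho> - r)\<^sup>+ \<in> \<Psi>\<close> the bound on \<open>S \<bullet> w\<close> yields \<open>w \<bullet> (\<rho> - r)\<^sup>+ \<ge> w \<bullet> \<rho> - w \<bullet> r \<ge> w \<bullet> \<eta>\<close>,
  the first-order optimality condition of the strictly convex form \<open>\<langle>\<eta>, \<Delta>\<eta>\<rangle>\<close> at \<open>\<eta>\<close>.\<close>

definition cesaro_mean :: "(nat \<Rightarrow> 'a::real_vector) \<Rightarrow> nat \<Rightarrow> 'a" where
  "cesaro_mean f t = (1 / real t) *\<^sub>R (\<Sum>s<t. f s)"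

lemma cesaro_mean_nth: "cesaro_mean f t $ q = cesaro_mean (\<lambda>s. f s $ q) t"
  by (simp add: cesaro_mean_def)

lemma cesaro_mean_diff: "cesaro_mean (\<lambda>s. f s - g s) t = cesaro_mean f t - cesaro_mean g t"
  by (simp add: cesaro_mean_def sum_subtractf scaleR_diff_right)

lemma inner_cesaro_mean: "a \<bullet> cesaro_mean f t = cesaro_mean (\<lambda>s. a \<bullet> f s) t"
  by (simp add: cesaro_mean_def inner_sum_right)

lemma cesaro_mean_nonneg: "(\<And>s. 0 \<le> f s) \<Longrightarrow> 0 \<le> cesaro_mean f t"
  for f :: "nat \<Rightarrow> real"
  by (simp add: cesaro_mean_def sum_nonneg)

lemma cesaro_mean_in_convex_hull:
  assumes "\<And>s. f s \<in> S"
  shows "cesaro_mean f (Suc n) \<in> convex hull S"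
  unfolding cesaro_mean_def scaleR_sum_right
  by (rule convex_sum) (auto simp: assms hull_subset[THEN subsetD] convex_convex_hull)

lemma tendsto_cesaro_mean_eventually_zero:
  fixes f :: "nat \<Rightarrow> 'a::real_normed_vector"
  assumes "eventually (\<lambda>s. f s = 0) sequentially"
  shows "cesaro_mean f \<longlonglongrightarrow> 0"
proof -
  obtain K where K: "\<And>s. K \<le> s \<Longrightarrow> f s = 0"
    using assms unfolding eventually_sequentially by blast
  have "cesaro_mean f t = (1 / real t) *\<^sub>R (\<Sum>s<K. f s)" if "K \<le> t" for t
    using that K by (simp add: cesaro_mean_def sum.mono_neutral_right)
  then have "eventually (\<lambda>t. (1 / real t) *\<^sub>R (\<Sum>s<K. f s) = cesaro_mean f t) sequentially"
    unfolding eventually_sequentially by metis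
  moreover have "(\<lambda>t. (1 / real t) *\<^sub>R (\<Sum>s<K. f s)) \<longlonglongrightarrow> 0"
    using tendsto_scaleR[OF lim_1_over_n tendsto_const, of "\<Sum>s<K. f s"] by simp
  ultimately show ?thesis by (rule Lim_transform_eventually[rotated])
qed

lemma cesaro_mean_limit_ge:
  fixes f :: "nat \<Rightarrow> real"
  assumes lim: "cesaro_mean f \<longlonglongrightarrow> L" and ge: "eventually (\<lambda>s. c \<le> f s) sequentially"
  shows "c \<le> L"
proof -
  obtain K where K: "\<And>s. K \<le> s \<Longrightarrow> c \<le> f s"
    using ge unfolding eventually_sequentially by blast
  define C where "C = (\<Sum>s<K. f s)"
  have "(C + (real t - real K) * c) / real t \<le> cesaro_mean f t" if "Suc K \<le> t" for t
  proof -
    have "(\<Sum>s<t. f s) = C + (\<Sum>s\<in>{K..<t}. f s)"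
      using that unfolding C_def by (metis Suc_leD lessThan_atLeast0 sum.atLeastLessThan_concat zero_le)
    moreover have "(real t - real K) * c \<le> (\<Sum>s\<in>{K..<t}. f s)"
      using sum_mono[of "{K..<t}" "\<lambda>_. c" f] K that by (simp add: of_nat_diff)
    ultimately show ?thesis
      using that by (simp add: cesaro_mean_def divide_right_mono)
  qed
  then have "eventually (\<lambda>t. (C + (real t - real K) * c) / real t \<le> cesaro_mean f t) sequentially"
    by (auto simp: eventually_sequentially)
  moreover have "(\<lambda>t. (C + (real t - real K) * c) / real t) \<longlonglongrightarrow> c"
    by real_asymp
  ultimately show ?thesis
    using tendsto_le[OF sequentially_bot lim] by blast
qed

lemma diag_matrix_vector_mult:
  fixes \<Delta> :: "real^'q::finite^'q"
  assumes "\<forall>i j. i \<noteq> j \<longrightarrow> \<Delta> $ i $ j = 0"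
  shows "\<Delta> *v x = (\<chi> i. \<Delta> $ i $ i * x $ i)"
proof -
  have "(\<Sum>j\<in>UNIV. \<Delta> $ i $ j * x $ j) = \<Delta> $ i $ i * x $ i" for i
    using assms by (subst sum.remove[of _ i]) auto
  then show ?thesis by (simp add: vec_eq_iff matrix_vector_mult_def)
qed

lemma inner_diag_matrix_vector_mult:
  fixes \<Delta> :: "real^'q::finite^'q"
  assumes "\<forall>i j. i \<noteq> j \<longrightarrow> \<Delta> $ i $ j = 0"
  shows "x \<bullet> (\<Delta> *v y) = (\<Sum>i\<in>UNIV. \<Delta> $ i $ i * x $ i * y $ i)"
  by (simp add: diag_matrix_vector_mult[OF assms] inner_vec_def algebra_simps)

lemma diag_matrix_symmetric:
  fixes \<Delta> :: "real^'q::finite^'q"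
  assumes "\<forall>i j. i \<noteq> j \<longrightarrow> \<Delta> $ i $ j = 0"
  shows "transpose \<Delta> = \<Delta>"
  unfolding vec_eq_iff transpose_def
proof (intro allI)
  show "(\<chi> i j. \<Delta> $ j $ i) $ i $ j = \<Delta> $ i $ j" for i j
    using assms by (cases "i = j") auto
qed

lemma diag_matrix_pos_definite:
  fixes \<Delta> :: "real^'q::finite^'q"
  assumes "\<forall>i j. i \<noteq> j \<longrightarrow> \<Delta> $ i $ j = 0" and "\<forall>i. 0 < \<Delta> $ i $ i" and "x \<noteq> 0"
  shows "0 < x \<bullet> (\<Delta> *v x)"
proof -
  obtain i where "x $ i \<noteq> 0" using assms(3) by (auto simp: vec_eq_iff)
  then have "0 < (\<Sum>i\<in>UNIV. \<Delta> $ i $ i * x $ i * x $ i)"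
    using assms(2)
    by (intro sum_pos2[of _ i]) (auto simp: mult.assoc zero_less_mult_iff linorder_neq_iff less_imp_le)
  then show ?thesis by (simp add: inner_diag_matrix_vector_mult[OF assms(1)])
qed

lemma quadratic_form_less_if_inner_le:
  fixes \<Delta> :: "real^'q::finite^'q"
  assumes sym: "transpose \<Delta> = \<Delta>" and pd: "\<And>x. x \<noteq> 0 \<Longrightarrow> 0 < x \<bullet> (\<Delta> *v x)"
    and le: "(\<Delta> *v \<eta>) \<bullet> \<eta> \<le> (\<Delta> *v \<eta>) \<bullet> \<eta>'" and ne: "\<eta>' \<noteq> \<eta>"
  shows "\<eta> \<bullet> (\<Delta> *v \<eta>) < \<eta>' \<bullet> (\<Delta> *v \<eta>')"
proof -
  have swap: "x \<bullet> (\<Delta> *v y) = (\<Delta> *v x) \<bullet> y" for x y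
    by (metis dot_lmul_matrix sym transpose_matrix_vector)
  have "\<eta>' \<bullet> (\<Delta> *v \<eta>') =
      (\<eta>' - \<eta>) \<bullet> (\<Delta> *v (\<eta>' - \<eta>)) + 2 * ((\<Delta> *v \<eta>) \<bullet> \<eta>') - \<eta> \<bullet> (\<Delta> *v \<eta>)"
    by (simp add: matrix_vector_mult_diff_distrib inner_diff_left inner_diff_right swap[of \<eta>' \<eta>]
        swap[of \<eta> \<eta>'] inner_commute[of \<eta>'])
  moreover have "0 < (\<eta>' - \<eta>) \<bullet> (\<Delta> *v (\<eta>' - \<eta>))" using pd ne by simp
  moreover have "\<eta> \<bullet> (\<Delta> *v \<eta>) = (\<Delta> *v \<eta>) \<bullet> \<eta>" by (rule swap)
  ultimately show ?thesis using le by linarith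
qed

lemma pos_part_nth [simp]: "pos_part x $ q = max 0 (x $ q)"
  by (simp add: pos_part_def)

lemma pos_part_in_Psi:
  assumes "finite SS" and "l \<in> convex hull SS"
  shows "pos_part (\<rho> - l) \<in> Psi \<rho> SS"
proof -
  obtain \<alpha> where "\<forall>S\<in>SS. 0 \<le> \<alpha> S" "sum \<alpha> SS = 1" "(\<Sum>S\<in>SS. \<alpha> S *\<^sub>R S) = l"
    using assms convex_hull_finite[OF assms(1)] by auto
  then show ?thesis unfolding Psi_def by fastforce
qed

lemma inner_Psi_lower_bound:
  assumes e_nonneg: "\<forall>q. 0 \<le> e $ q" and S_le: "\<forall>S\<in>SS. S \<bullet> e \<le> c" and "0 \<le> c"
    and "\<eta>' \<in> Psi \<rho> SS"
  shows "e \<bullet> \<rho> - c \<le> e \<bullet> \<eta>'"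
proof -
  obtain \<beta> r where \<eta>': "\<eta>' = pos_part (\<rho> - r)" and \<beta>: "\<forall>S\<in>SS. 0 \<le> \<beta> S" "sum \<beta> SS \<le> 1"
    and r: "r = (\<Sum>S\<in>SS. \<beta> S *\<^sub>R S)"
    using assms(4) unfolding Psi_def by blast
  have "e \<bullet> r = (\<Sum>S\<in>SS. \<beta> S * (S \<bullet> e))"
    by (simp add: r inner_sum_right inner_commute)
  also have "\<dots> \<le> (\<Sum>S\<in>SS. \<beta> S * c)"
    using \<beta>(1) S_le by (intro sum_mono mult_left_mono) auto
  also have "\<dots> \<le> c"
    using mult_right_mono[OF \<beta>(2) \<open>0 \<le> c\<close>] by (simp add: sum_distrib_right)
  finally have "e \<bullet> \<rho> - c \<le> e \<bullet> (\<rho> - r)" by (simp add: inner_diff_right)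
  also have "\<dots> \<le> e \<bullet> \<eta>'"
    unfolding \<eta>' inner_vec_def using e_nonneg by (intro sum_mono) (simp add: mult_left_mono)
  finally show ?thesis .
qed

lemma filterlim_at_top_if_ratio_tendsto_pos:
  assumes "(\<lambda>t. x t / real t) \<longlonglongrightarrow> a" and "0 < a"
  shows "filterlim x at_top sequentially"
proof -
  have "filterlim (\<lambda>t. x t / real t * real t) at_top sequentially"
    by (rule filterlim_tendsto_pos_mult_at_top[OF assms filterlim_real_sequentially])
  moreover have "eventually (\<lambda>t. x t / real t * real t = x t) sequentially"
    using eventually_gt_at_top[of 0] by eventually_elim simp
  ultimately show ?thesis using filterlim_cong by fastforce
qed

locale maxweight_fluid_limit =
  fixes SS :: "(real^'q::finite) set"
    and \<Delta> :: "real^'q^'q"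
    and A X Sch :: "nat \<Rightarrow> real^'q"
    and \<rho> \<eta> :: "real^'q"
  assumes SS_finite: "finite SS"
    and SS_nonneg: "\<forall>S\<in>SS. \<forall>q. 0 \<le> S $ q"
    and Delta_diag: "\<forall>i j. i \<noteq> j \<longrightarrow> \<Delta> $ i $ j = 0"
    and Delta_pos: "\<forall>i. 0 < \<Delta> $ i $ i"
    and A_nonneg: "\<forall>t q. 0 \<le> A t $ q"
    and rho_lim: "cesaro_mean A \<longlonglongrightarrow> \<rho>"
    and X0: "X 0 = 0"
    and X_step: "\<forall>t. X (Suc t) = X t + A t - (\<chi> q. min (Sch t $ q) (X t $ q))"
    and Sch_in: "\<forall>t. Sch t \<in> SS"
    and Sch_maxweight: "\<forall>t. \<forall>S\<in>SS. S \<bullet> (\<Delta> *v X t) \<le> Sch t \<bullet> (\<Delta> *v X t)"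
    and eta_lim: "(\<lambda>t. (1 / real t) *\<^sub>R X t) \<longlonglongrightarrow> \<eta>"
begin

definition departures :: "nat \<Rightarrow> real^'q" where
  "departures t = (\<chi> q. min (Sch t $ q) (X t $ q))"

lemma queue_nonneg: "0 \<le> X t $ q"
proof (induction t)
  case 0
  then show ?case using X0 by simp
next
  case (Suc t)
  then show ?case using X_step A_nonneg[rule_format, of t q] by (auto simp: min_def)
qed

lemma departures_nonneg: "0 \<le> departures t $ q"
  using queue_nonneg Sch_in SS_nonneg by (simp add: departures_def)

lemma departures_le_schedule: "departures t $ q \<le> Sch t $ q"
  by (simp add: departures_def)

lemma queue_eq_arrivals_minus_departures: "X t = (\<Sum>s<t. A s) - (\<Sum>s<t. departures s)"
proof (induction t)
  case 0
  then show ?case using X0 by simp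
next
  case (Suc t)
  have "X (Suc t) = X t + A t - departures t" using X_step by (simp add: departures_def)
  then show ?case by (simp add: Suc.IH)
qed

lemma cesaro_mean_departures: "cesaro_mean departures \<longlonglongrightarrow> \<rho> - \<eta>"
proof -
  have "cesaro_mean departures = (\<lambda>t. cesaro_mean A t - (1 / real t) *\<^sub>R X t)"
    by (simp add: fun_eq_iff cesaro_mean_def queue_eq_arrivals_minus_departures scaleR_diff_right)
  then show ?thesis using tendsto_diff[OF rho_lim eta_lim] by simp
qed

lemma eta_nonneg: "0 \<le> \<eta> $ q"
  using queue_nonneg by (intro LIMSEQ_le_const[OF tendsto_vec_nth[OF eta_lim]]) simp

lemma rho_minus_eta_nonneg: "0 \<le> (\<rho> - \<eta>) $ q"
  using departures_nonneg
  by (intro LIMSEQ_le_const[OF tendsto_vec_nth[OF cesaro_mean_departures]])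
    (simp add: cesaro_mean_nth cesaro_mean_nonneg)

text \<open>A queue with positive fluid limit eventually exceeds every service rate.\<close>
lemma departures_eventually_eq_schedule:
  assumes "0 < \<eta> $ q"
  shows "eventually (\<lambda>t. departures t $ q = Sch t $ q) sequentially"
proof -
  have "(\<lambda>t. X t $ q / real t) \<longlonglongrightarrow> \<eta> $ q"
    using tendsto_vec_nth[OF eta_lim, of q] by simp
  then have "filterlim (\<lambda>t. X t $ q) at_top sequentially"
    using assms by (rule filterlim_at_top_if_ratio_tendsto_pos)
  then have "eventually (\<lambda>t. \<forall>S\<in>SS. S $ q < X t $ q) sequentially"
    by (intro eventually_ball_finite[OF SS_finite]) (simp add: filterlim_at_top_dense)
  then show ?thesis
    by eventually_elim (use Sch_in in \<open>auto simp: departures_def\<close>)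
qed

lemma weight_nth: "(\<Delta> *v \<eta>) $ q = \<Delta> $ q $ q * \<eta> $ q"
  by (simp add: diag_matrix_vector_mult[OF Delta_diag])

lemma weight_nonneg: "0 \<le> (\<Delta> *v \<eta>) $ q"
  using Delta_pos eta_nonneg by (simp add: weight_nth less_imp_le)

lemma weighted_departures_eventually:
  "eventually (\<lambda>t. (\<Delta> *v \<eta>) \<bullet> departures t = (\<Delta> *v \<eta>) \<bullet> Sch t) sequentially"
proof -
  have "eventually (\<lambda>t. \<forall>q. 0 < \<eta> $ q \<longrightarrow> departures t $ q = Sch t $ q) sequentially"
    using departures_eventually_eq_schedule
    by (intro eventually_all_finite) (auto intro: eventually_mono)
  then show ?thesis
  proof eventually_elim
    case (elim t)
    have agree: "(\<Delta> *v \<eta>) $ q * departures t $ q = (\<Delta> *v \<eta>) $ q * Sch t $ q" for q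
      using elim eta_nonneg[of q] by (cases "0 < \<eta> $ q") (auto simp: weight_nth)
    show ?case unfolding inner_vec_def inner_real_def by (simp only: agree)
  qed
qed

text \<open>The limit \<open>X(t)/t \<longrightarrow> \<eta>\<close> is uniform over the finitely many schedules.\<close>
lemma schedule_eventually_near_maxweight:
  assumes "S \<in> SS" and "0 < \<epsilon>"
  shows "eventually (\<lambda>t. S \<bullet> (\<Delta> *v \<eta>) - \<epsilon> \<le> Sch t \<bullet> (\<Delta> *v \<eta>)) sequentially"
proof -
  let ?x = "\<lambda>t. (1 / real t) *\<^sub>R X t"
  have "(\<lambda>t. T \<bullet> (\<Delta> *v ?x t)) \<longlonglongrightarrow> T \<bullet> (\<Delta> *v \<eta>)" for T
    by (intro tendsto_inner tendsto_const eta_lim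
        bounded_linear.tendsto[OF matrix_vector_mul_bounded_linear])
  then have "eventually (\<lambda>t. \<bar>T \<bullet> (\<Delta> *v ?x t) - T \<bullet> (\<Delta> *v \<eta>)\<bar> < \<epsilon> / 2) sequentially" for T
    using \<open>0 < \<epsilon>\<close> unfolding tendsto_iff dist_real_def by (meson half_gt_zero)
  then have "eventually (\<lambda>t. \<forall>T\<in>SS. \<bar>T \<bullet> (\<Delta> *v ?x t) - T \<bullet> (\<Delta> *v \<eta>)\<bar> < \<epsilon> / 2) sequentially"
    by (intro eventually_ball_finite[OF SS_finite]) auto
  then show ?thesis
  proof eventually_elim
    case (elim t)
    have "S \<bullet> (\<Delta> *v ?x t) \<le> Sch t \<bullet> (\<Delta> *v ?x t)"
      using Sch_maxweight assms(1) by (simp add: matrix_vector_mult_scaleR divide_right_mono)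
    moreover have "\<bar>S \<bullet> (\<Delta> *v ?x t) - S \<bullet> (\<Delta> *v \<eta>)\<bar> < \<epsilon> / 2"
      and "\<bar>Sch t \<bullet> (\<Delta> *v ?x t) - Sch t \<bullet> (\<Delta> *v \<eta>)\<bar> < \<epsilon> / 2"
      using elim assms(1) Sch_in by auto
    ultimately show ?case by linarith
  qed
qed

lemma schedule_weight_le: "S \<in> SS \<Longrightarrow> S \<bullet> (\<Delta> *v \<eta>) \<le> (\<Delta> *v \<eta>) \<bullet> (\<rho> - \<eta>)"
proof (rule field_le_epsilon)
  fix \<epsilon> :: real
  assume "S \<in> SS" "0 < \<epsilon>"
  have "cesaro_mean (\<lambda>t. (\<Delta> *v \<eta>) \<bullet> departures t) \<longlonglongrightarrow> (\<Delta> *v \<eta>) \<bullet> (\<rho> - \<eta>)"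
    using tendsto_inner[OF tendsto_const cesaro_mean_departures] by (simp add: inner_cesaro_mean)
  moreover have "eventually (\<lambda>t. S \<bullet> (\<Delta> *v \<eta>) - \<epsilon> \<le> (\<Delta> *v \<eta>) \<bullet> departures t) sequentially"
    using schedule_eventually_near_maxweight[OF \<open>S \<in> SS\<close> \<open>0 < \<epsilon>\<close>] weighted_departures_eventually
    by eventually_elim (simp add: inner_commute)
  ultimately show "S \<bullet> (\<Delta> *v \<eta>) \<le> (\<Delta> *v \<eta>) \<bullet> (\<rho> - \<eta>) + \<epsilon>"
    using cesaro_mean_limit_ge by fastforce
qed

text \<open>The mean schedules need not converge; any limit point \<open>l\<close> of them serves.\<close>
lemma eta_eq_pos_part: "\<exists>l\<in>convex hull SS. \<eta> = pos_part (\<rho> - l)"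
proof -
  have "seq_compact (convex hull SS)"
    by (intro compact_imp_seq_compact compact_convex_hull finite_imp_compact SS_finite)
  then obtain l \<sigma> where l: "l \<in> convex hull SS" and "strict_mono \<sigma>"
    and lim_l: "(\<lambda>n. cesaro_mean Sch (Suc (\<sigma> n))) \<longlonglongrightarrow> l"
    using cesaro_mean_in_convex_hull[of Sch SS] Sch_in unfolding seq_compact_def o_def by meson
  define \<tau> where "\<tau> n = Suc (\<sigma> n)" for n
  have \<tau>: "strict_mono \<tau>" using \<open>strict_mono \<sigma>\<close> by (simp add: strict_mono_def \<tau>_def)
  define slack where "slack t = Sch t - departures t" for t
  have "(\<lambda>n. cesaro_mean slack (\<tau> n)) \<longlonglongrightarrow> l - (\<rho> - \<eta>)"
    using tendsto_diff[OF lim_l LIMSEQ_subseq_LIMSEQ[OF cesaro_mean_departures \<tau>]]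
    by (simp add: slack_def[abs_def] cesaro_mean_diff \<tau>_def o_def)
  then have slack_lim: "(\<lambda>n. cesaro_mean slack (\<tau> n) $ q) \<longlonglongrightarrow> (l - (\<rho> - \<eta>)) $ q" for q
    by (rule tendsto_vec_nth)
  have "0 \<le> (l - (\<rho> - \<eta>)) $ q" for q
    using departures_le_schedule by (intro LIMSEQ_le_const[OF slack_lim])
      (simp add: cesaro_mean_nth slack_def cesaro_mean_nonneg)
  then have le: "(\<rho> - \<eta>) $ q \<le> l $ q" for q by simp
  have eq: "(\<rho> - \<eta>) $ q = l $ q" if "0 < \<eta> $ q" for q
  proof -
    have "cesaro_mean (\<lambda>t. slack t $ q) \<longlonglongrightarrow> 0"
      using departures_eventually_eq_schedule[OF that]
      by (intro tendsto_cesaro_mean_eventually_zero) (auto simp: slack_def elim: eventually_mono)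
    from LIMSEQ_subseq_LIMSEQ[OF this \<tau>] have "(\<lambda>n. cesaro_mean slack (\<tau> n) $ q) \<longlonglongrightarrow> 0"
      by (simp add: cesaro_mean_nth o_def)
    from LIMSEQ_unique[OF slack_lim this] show ?thesis by simp
  qed
  have "\<eta> $ q = max 0 ((\<rho> - l) $ q)" for q
    using le[of q] eq[of q] eta_nonneg[of q] by (cases "0 < \<eta> $ q") auto
  then have "\<eta> = pos_part (\<rho> - l)" by (simp add: vec_eq_iff)
  with l show ?thesis by blast
qed

lemma eta_in_Psi: "\<eta> \<in> Psi \<rho> SS"
  using eta_eq_pos_part pos_part_in_Psi[OF SS_finite] by blast

lemma eta_strict_minimizer:
  assumes "\<eta>' \<in> Psi \<rho> SS" and "\<eta>' \<noteq> \<eta>"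
  shows "\<eta> \<bullet> (\<Delta> *v \<eta>) < \<eta>' \<bullet> (\<Delta> *v \<eta>')"
proof (rule quadratic_form_less_if_inner_le[OF diag_matrix_symmetric[OF Delta_diag]])
  show "0 < x \<bullet> (\<Delta> *v x)" if "x \<noteq> 0" for x
    using diag_matrix_pos_definite[OF Delta_diag Delta_pos that] .
  have "0 \<le> (\<Delta> *v \<eta>) \<bullet> (\<rho> - \<eta>)"
    using weight_nonneg rho_minus_eta_nonneg by (simp add: inner_vec_def sum_nonneg)
  then show "(\<Delta> *v \<eta>) \<bullet> \<eta> \<le> (\<Delta> *v \<eta>) \<bullet> \<eta>'"
    using inner_Psi_lower_bound[OF _ _ _ assms(1)] weight_nonneg schedule_weight_le
    by (fastforce simp: inner_diff_right)
qed (rule assms(2))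

end

theorem proposition2:
  fixes SS :: "(real^'q::finite) set"
    and \<Delta> :: "real^'q^'q"
    and A X Sch :: "nat \<Rightarrow> real^'q"
    and Abar \<rho> \<eta> :: "real^'q"
  assumes SS_fin: "finite SS" and SS_ne: "SS \<noteq> {}"
    and SS_nonneg: "\<forall>S\<in>SS. \<forall>q. 0 \<le> S $ q"
    and Delta_diag: "\<forall>i j. i \<noteq> j \<longrightarrow> \<Delta> $ i $ j = 0"
    and Delta_pos: "\<forall>i. 0 < \<Delta> $ i $ i"
    and A_bnd: "\<forall>t q. 0 \<le> A t $ q \<and> A t $ q \<le> Abar $ q"
    and rho_lim: "(\<lambda>t. (1 / real t) *\<^sub>R (\<Sum>s<t. A s)) \<longlonglongrightarrow> \<rho>"
    and rho_pos: "\<forall>q. 0 < \<rho> $ q"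
    and X0: "X 0 = 0"
    and X_step: "\<forall>t. X (Suc t) = X t + A t - (\<chi> q. min (Sch t $ q) (X t $ q))"
    and Sch_in: "\<forall>t. Sch t \<in> SS"
    and Sch_maxweight: "\<forall>t. \<forall>S\<in>SS. S \<bullet> (\<Delta> *v X t) \<le> Sch t \<bullet> (\<Delta> *v X t)"
    and overload: "\<rho> \<notin> stab_region SS"
    and eta_lim: "(\<lambda>t. (1 / real t) *\<^sub>R X t) \<longlonglongrightarrow> \<eta>"
  shows "\<eta> \<in> Psi \<rho> SS \<and>
         (\<forall>\<eta>'\<in>Psi \<rho> SS. \<eta>' \<noteq> \<eta> \<longrightarrow> \<eta> \<bullet> (\<Delta> *v \<eta>) < \<eta>' \<bullet> (\<Delta> *v \<eta>'))"
proof -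
  interpret maxweight_fluid_limit SS \<Delta> A X Sch \<rho> \<eta>
    using assms by unfold_locales (auto simp: cesaro_mean_def[abs_def])
  show ?thesis using eta_in_Psi eta_strict_minimizer by blast
qed

end
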